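(* Consider the uplink system and problem in the context, with the antenna-moving-region constraints $0\le x_m\le x_{\max}$, $0\le y_n\le y_{\max}$ omitted, and suppose each user has a single channel path. If $K(K-1)/2\le I_M+I_N$, where $I_M$ and $I_N$ denote the total number of prime factors (counted with multiplicity) of $M$ and $N$ respectively, then the lower bound $p_k\ge\bar p_k:=\frac{\sigma^2(2^{r_k}-1)}{MN|b_k|^2}$ ($1\le k\le K$) valid for all feasible points is tight: there exist feasible $(\mathbf{x},\mathbf{y},\mathbf{W},\mathbf{p})$ with $p_k=\bar p_k$ for all $k$ (so the minimum total transmit power equals $\sum_k\bar p_k$).
   Context: A base station has a cross-linked movable antenna array with $M$ columns and $N$ rows; horizontal APV $\mathbf{x}=[x_1,\dots,x_M]^{\mathrm T}\in\mathbb{R}^M$, vertical APV $\mathbf{y}=[y_1,\dots,y_N]^{\mathrm T}\in\mathbb{R}^N$, antenna $(m,n)$ at $(x_m,y_n)$. $K$ single-antenna users; user $k$ has a single path with complex coefficient $b_k\ne0$ and virtual angles $\vartheta_k,\varphi_k\in[-1,1]$, where different users have distinct virtual angles: $\vartheta_k\ne\vartheta_q$ and $\varphi_k\ne\varphi_q$ for $k\ne q$. With wavelength $\lambda>0$, the channel is $\mathbf{h}_k(\mathbf{x},\mathbf{y})=b_k\,\mathbf{a}^{\mathrm{hor}}_k(\mathbf{x})\otimes\mathbf{a}^{\mathrm{ver}}_k(\mathbf{y})$, with $\mathbf{a}^{\mathrm{hor}}_k(\mathbf{x})=[e^{-\mathrm{j}\frac{2\pi}{\lambda}x_m\vartheta_k}]_{m=1}^M$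 and $\mathbf{a}^{\mathrm{ver}}_k(\mathbf{y})=[e^{-\mathrm{j}\frac{2\pi}{\lambda}y_n\varphi_k}]_{n=1}^N$. With combining matrix $\mathbf{W}=[\mathbf{w}_1,\dots,\mathbf{w}_K]\in\mathbb{C}^{MN\times K}$, powers $p_k$, noise power $\sigma^2>0$, the SINR of user $k$ is $\gamma_k=\frac{|\mathbf{w}_k^{\mathrm H}\mathbf{h}_k|^2p_k}{\sum_{q\ne k}|\mathbf{w}_k^{\mathrm H}\mathbf{h}_q|^2p_q+\|\mathbf{w}_k\|_2^2\sigma^2}$. Feasibility means: $\log_2(1+\gamma_k)\ge r_k$, $p_k\ge0$ for all $k$ (given $r_k\ge0$), $x_{m+1}-x_m\ge d_{\min,x}$ for $1\le m\le M-1$, $y_{n+1}-y_n\ge d_{\min,y}$ for $1\le n\le N-1$, with given $d_{\min,x},d_{\min,y}>0$. The objective is to minimize $\sum_k p_k$. *)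

theory Defs
  imports Complex_Main "HOL-Computational_Algebra.Primes"
begin

text \<open>Antenna (m,n), 0-based: m < M (column), n < N (row). Users k < K (0-based).
  Vectors in C^{MN} are indexed by pairs (m,n); the Kronecker ordering is irrelevant
  for inner products and norms.\<close>

definition chan :: "real \<Rightarrow> (nat \<Rightarrow> complex) \<Rightarrow> (nat \<Rightarrow> real) \<Rightarrow> (nat \<Rightarrow> real)
    \<Rightarrow> (nat \<Rightarrow> real) \<Rightarrow> (nat \<Rightarrow> real) \<Rightarrow> nat \<Rightarrow> nat \<times> nat \<Rightarrow> complex" where
  "chan lam b theta phi x y k mn =
     b k * cis (- 2 * pi / lam * x (fst mn) * theta k) * cis (- 2 * pi / lam * y (snd mn) * phi k)"

definition cinner :: "nat \<Rightarrow> nat \<Rightarrow> (nat \<times> nat \<Rightarrow> complex) \<Rightarrow> (nat \<times> nat \<Rightarrow> complex) \<Rightarrow> complex" where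
  "cinner M N w h = (\<Sum>m<M. \<Sum>n<N. cnj (w (m, n)) * h (m, n))"

definition cnormsq :: "nat \<Rightarrow> nat \<Rightarrow> (nat \<times> nat \<Rightarrow> complex) \<Rightarrow> real" where
  "cnormsq M N w = (\<Sum>m<M. \<Sum>n<N. (cmod (w (m, n)))\<^sup>2)"

definition sinr :: "nat \<Rightarrow> nat \<Rightarrow> nat \<Rightarrow> real \<Rightarrow> (nat \<Rightarrow> complex) \<Rightarrow> (nat \<Rightarrow> real) \<Rightarrow> (nat \<Rightarrow> real)
    \<Rightarrow> real \<Rightarrow> (nat \<Rightarrow> real) \<Rightarrow> (nat \<Rightarrow> real) \<Rightarrow> (nat \<Rightarrow> nat \<times> nat \<Rightarrow> complex)
    \<Rightarrow> (nat \<Rightarrow> real) \<Rightarrow> nat \<Rightarrow> real" where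
  "sinr M N K lam b theta phi sigma2 x y W p k =
     (cmod (cinner M N (W k) (chan lam b theta phi x y k)))\<^sup>2 * p k /
     ((\<Sum>q\<in>{..<K} - {k}. (cmod (cinner M N (W k) (chan lam b theta phi x y q)))\<^sup>2 * p q)
       + cnormsq M N (W k) * sigma2)"

definition feasible :: "nat \<Rightarrow> nat \<Rightarrow> nat \<Rightarrow> real \<Rightarrow> (nat \<Rightarrow> complex) \<Rightarrow> (nat \<Rightarrow> real) \<Rightarrow> (nat \<Rightarrow> real)
    \<Rightarrow> real \<Rightarrow> (nat \<Rightarrow> real) \<Rightarrow> real \<Rightarrow> real
    \<Rightarrow> (nat \<Rightarrow> real) \<Rightarrow> (nat \<Rightarrow> real) \<Rightarrow> (nat \<Rightarrow> nat \<times> nat \<Rightarrow> complex) \<Rightarrow> (nat \<Rightarrow> real) \<Rightarrow> bool" where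
  "feasible M N K lam b theta phi sigma2 r dminx dminy x y W p \<longleftrightarrow>
     (\<forall>k<K. log 2 (1 + sinr M N K lam b theta phi sigma2 x y W p k) \<ge> r k \<and> p k \<ge> 0) \<and>
     (\<forall>m. m + 1 < M \<longrightarrow> x (m + 1) - x m \<ge> dminx) \<and>
     (\<forall>n. n + 1 < N \<longrightarrow> y (n + 1) - y n \<ge> dminy)"

definition pbar :: "nat \<Rightarrow> nat \<Rightarrow> (nat \<Rightarrow> complex) \<Rightarrow> real \<Rightarrow> (nat \<Rightarrow> real) \<Rightarrow> nat \<Rightarrow> real" where
  "pbar M N b sigma2 r k = sigma2 * (2 powr r k - 1) / (real (M * N) * (cmod (b k))\<^sup>2)"

definition Omega :: "nat \<Rightarrow> nat" where
  "Omega n = size (prime_factorization n)"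

end

theory Submission
  imports Defs "HOL-Analysis.Convex"
begin

(* By Cauchy-Schwarz, |w^H h_k|^2 <= ||w||^2 MN |b_k|^2, so the SINR of user k is at most
   MN |b_k|^2 p_k / sigma^2, which gives the lower bound pbar_k.  For tightness take the matched
   filters w_k = h_k: the cross term h_k^H h_q factorises into a horizontal and a vertical array
   factor, and it vanishes as soon as one of them does.  Replicating a q-element subarray along a
   uniform p-element array multiplies the array factors, and for p >= 2 the uniform factor can be
   made to vanish at any nonzero frequency with arbitrarily large spacing.  Peeling off one prime
   factor of n at a time, an n-element array with prescribed minimum spacing can therefore null
   Omega n given nonzero frequencies.  Distributing the K(K-1)/2 user pairs between the horizontal
   and the vertical array makes all users orthogonal, and then p = pbar is feasible. *)

definition array_factor :: "nat \<Rightarrow> (nat \<Rightarrow> real) \<Rightarrow> real \<Rightarrow> complex" where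
  "array_factor n x \<alpha> = (\<Sum>m<n. cis (\<alpha> * x m))"

definition min_spaced :: "real \<Rightarrow> nat \<Rightarrow> (nat \<Rightarrow> real) \<Rightarrow> bool" where
  "min_spaced d n x \<longleftrightarrow> (\<forall>m. m + 1 < n \<longrightarrow> x (m + 1) - x m \<ge> d)"

lemma cmod_cinner_sq_le: "(cmod (cinner M N w h))\<^sup>2 \<le> cnormsq M N w * cnormsq M N h"
proof -
  let ?I = "{..<M} \<times> {..<N}"
  have "cmod (cinner M N w h) \<le> (\<Sum>i\<in>?I. cmod (w i) * cmod (h i))"
    unfolding cinner_def sum.cartesian_product
    by (rule order_trans[OF norm_sum]) (simp add: norm_mult)
  then have "(cmod (cinner M N w h))\<^sup>2 \<le> (\<Sum>i\<in>?I. cmod (w i) * cmod (h i))\<^sup>2"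
    by (simp add: power_mono)
  also have "\<dots> \<le> (\<Sum>i\<in>?I. (cmod (w i))\<^sup>2) * (\<Sum>i\<in>?I. (cmod (h i))\<^sup>2)"
    by (rule Cauchy_Schwarz_ineq_sum)
  finally show ?thesis
    by (simp add: cnormsq_def sum.cartesian_product split_def)
qed

lemma cmod_chan: "cmod (chan lam b theta phi x y k mn) = cmod (b k)"
  by (simp add: chan_def norm_mult)

lemma cnormsq_chan: "cnormsq M N (chan lam b theta phi x y k) = real (M * N) * (cmod (b k))\<^sup>2"
  by (simp add: cnormsq_def cmod_chan)

lemma sinr_le_array_gain:
  assumes "sigma2 > 0" and "\<forall>q<K. p q \<ge> 0" and "k < K"
  shows "sinr M N K lam b theta phi sigma2 x y W p k
           \<le> real (M * N) * (cmod (b k))\<^sup>2 * p k / sigma2"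
proof -
  let ?G = "real (M * N) * (cmod (b k))\<^sup>2"
  let ?S = "cnormsq M N (W k)"
  let ?a = "(cmod (cinner M N (W k) (chan lam b theta phi x y k)))\<^sup>2"
  let ?I = "\<Sum>q\<in>{..<K} - {k}. (cmod (cinner M N (W k) (chan lam b theta phi x y q)))\<^sup>2 * p q"
  have pk: "p k \<ge> 0" using assms by simp
  have "?I \<ge> 0" using assms(2) by (intro sum_nonneg) auto
  have "?S \<ge> 0" unfolding cnormsq_def by (intro sum_nonneg) auto
  have gain: "?a \<le> ?S * ?G"
    using cmod_cinner_sq_le[of M N "W k" "chan lam b theta phi x y k"] unfolding cnormsq_chan .
  show ?thesis
  proof (cases "?S = 0")
    case True
    then have "?a = 0" using gain by simp
    then show ?thesis
      using pk assms(1) by (simp add: sinr_def)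
  next
    case False
    with \<open>?S \<ge> 0\<close> have "?S > 0" by simp
    have "?a * p k / (?I + ?S * sigma2) \<le> ?a * p k / (?S * sigma2)"
      using \<open>?I \<ge> 0\<close> \<open>?S > 0\<close> assms(1) pk by (intro divide_left_mono mult_pos_pos add_nonneg_pos) auto
    also have "\<dots> \<le> ?S * ?G * p k / (?S * sigma2)"
      using gain pk \<open>?S > 0\<close> assms(1) by (intro divide_right_mono mult_right_mono) auto
    also have "\<dots> = ?G * p k / sigma2" using \<open>?S > 0\<close> by simp
    finally show ?thesis unfolding sinr_def .
  qed
qed

lemma feasible_imp_pbar_le:
  assumes "feasible M N K lam b theta phi sigma2 r dminx dminy x y W p"
    and "M \<ge> 1" "N \<ge> 1" "sigma2 > 0" "b k \<noteq> 0" "k < K"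
  shows "pbar M N b sigma2 r k \<le> p k"
proof -
  let ?G = "real (M * N) * (cmod (b k))\<^sup>2"
  let ?sinr = "sinr M N K lam b theta phi sigma2 x y W p k"
  have rate: "r k \<le> log 2 (1 + ?sinr)" and p_nonneg: "\<forall>q<K. p q \<ge> 0"
    using assms(1,6) by (auto simp: feasible_def)
  have "?sinr \<ge> 0"
    using p_nonneg assms(4,6) unfolding sinr_def cnormsq_def
    by (intro divide_nonneg_nonneg add_nonneg_nonneg sum_nonneg mult_nonneg_nonneg) auto
  with rate have "2 powr r k \<le> 1 + ?sinr"
    by (simp add: le_log_iff)
  also have "?sinr \<le> ?G * p k / sigma2"
    using sinr_le_array_gain assms(4,6) p_nonneg by blast
  finally have "sigma2 * (2 powr r k - 1) \<le> ?G * p k"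
    using assms(4) by (simp add: field_simps)
  moreover have "?G > 0" using assms(2,3,5) by simp
  ultimately show ?thesis unfolding pbar_def by (simp add: field_simps)
qed

lemma uniform_array_factor_eq_0:
  assumes "p \<ge> 2" and "\<alpha> \<noteq> 0"
  shows "\<exists>s \<ge> L. array_factor p (\<lambda>j. s * real j) \<alpha> = 0"
proof -
  obtain j :: nat where j: "L * \<bar>\<alpha>\<bar> / (2 * pi) \<le> real j"
    using real_arch_simple by blast
  \<comment> \<open>choose \<open>s\<close> with \<open>\<alpha> s = \<plusminus>(2\<pi>/p + 2\<pi>j)\<close>, so that \<open>cis (\<alpha> s)\<close> is a \<open>p\<close>-th root of unity other than 1\<close>
  define t where "t = 2 * pi * (1 + real p * real j) / real p"
  define s where "s = t / \<bar>\<alpha>\<bar>"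
  define z where "z = cis (\<alpha> * s)"
  have "L * \<bar>\<alpha>\<bar> \<le> 2 * pi * real j"
    using j by (simp add: field_simps)
  also have "\<dots> \<le> t"
    using assms(1) by (simp add: t_def field_simps)
  finally have "L \<le> s"
    using assms(2) by (simp add: s_def field_simps)
  have as: "\<alpha> * s = sgn \<alpha> * t"
    using assms(2) by (simp add: s_def sgn_if)
  have "real p * (\<alpha> * s) = 2 * pi * (sgn \<alpha> * (1 + real p * real j))"
    using assms(1) by (simp add: as t_def)
  then have "z ^ p = cis (2 * pi * (sgn \<alpha> * (1 + real p * real j)))"
    by (simp add: z_def DeMoivre)
  also have "\<dots> = 1"
    using assms(2) by (intro cis_multiple_2pi) (auto simp: sgn_if)
  finally have "z ^ p = 1" .
  have "z \<noteq> 1"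
  proof
    assume "z = 1"
    then have "cos t = 1"
      using assms(2) by (auto simp: z_def as complex_eq_iff sgn_if split: if_splits)
    then obtain n :: int where "t = real_of_int n * 2 * pi"
      using cos_one_2pi_int by blast
    then have "2 * pi * (1 + real p * real j) = 2 * pi * (real_of_int n * real p)"
      using assms(1) by (simp add: t_def field_simps)
    then have "real_of_int (1 + int p * int j) = real_of_int (n * int p)"
      by simp
    then have "int p dvd 1"
      by (metis dvd_add_times_triv_right_iff dvd_triv_right mult.commute of_int_eq_iff)
    with assms(1) show False by simp
  qed
  have "array_factor p (\<lambda>j. s * real j) \<alpha> = (\<Sum>j<p. z ^ j)"
    by (simp add: array_factor_def z_def DeMoivre mult_ac)
  also have "\<dots> = 0"
    using \<open>z ^ p = 1\<close> \<open>z \<noteq> 1\<close> by (simp add: sum_gp_strict)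
  finally show ?thesis
    using \<open>L \<le> s\<close> by blast
qed

lemma Omega_prime_mult: "prime p \<Longrightarrow> n > 0 \<Longrightarrow> Omega (p * n) = Suc (Omega n)"
  by (simp add: Omega_def prime_factorization_mult prime_factorization_prime prime_gt_0_nat)

lemma sum_lessThan_mult_mod_div:
  fixes p q :: nat
  assumes "q > 0"
  shows "(\<Sum>m<p * q. f (m mod q) (m div q)) = (\<Sum>j<p. \<Sum>i<q. f i j)"
proof -
  have "(\<Sum>m<p * q. f (m mod q) (m div q)) = (\<Sum>j<p. \<Sum>m\<in>{j * q..<j * q + q}. f (m mod q) (m div q))"
    by (rule sum.nat_group[symmetric])
  also have "\<dots> = (\<Sum>j<p. \<Sum>i<q. f i j)"
  proof (rule sum.cong[OF refl])
    fix j
    have "(\<Sum>m\<in>{j * q..<j * q + q}. f (m mod q) (m div q))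
        = (\<Sum>i<q. f ((i + j * q) mod q) ((i + j * q) div q))"
      using sum.shift_bounds_nat_ivl[of "\<lambda>m. f (m mod q) (m div q)" 0 "j * q" q]
      by (simp only: atLeast0LessThan add_0 add.commute)
    also have "\<dots> = (\<Sum>i<q. f i j)"
      using assms by (intro sum.cong) auto
    finally show "(\<Sum>m\<in>{j * q..<j * q + q}. f (m mod q) (m div q)) = (\<Sum>i<q. f i j)" .
  qed
  finally show ?thesis .
qed

lemma array_factor_nested:
  assumes "q > 0"
  shows "array_factor (p * q) (\<lambda>m. x (m mod q) + s * real (m div q)) \<alpha>
           = array_factor q x \<alpha> * array_factor p (\<lambda>j. s * real j) \<alpha>"
proof -
  have "array_factor (p * q) (\<lambda>m. x (m mod q) + s * real (m div q)) \<alpha>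
      = (\<Sum>m<p * q. (\<lambda>i j. cis (\<alpha> * x i) * cis (\<alpha> * (s * real j))) (m mod q) (m div q))"
    by (simp add: array_factor_def cis_mult distrib_left)
  also have "\<dots> = (\<Sum>j<p. \<Sum>i<q. cis (\<alpha> * x i) * cis (\<alpha> * (s * real j)))"
    using assms by (rule sum_lessThan_mult_mod_div)
  also have "\<dots> = array_factor q x \<alpha> * array_factor p (\<lambda>j. s * real j) \<alpha>"
    by (simp add: array_factor_def sum_product sum.swap[of _ "{..<p}"])
  finally show ?thesis .
qed

lemma min_spaced_nested:
  assumes "q > 0" and "min_spaced d q x" and "x (q - 1) - x 0 + d \<le> s"
  shows "min_spaced d (p * q) (\<lambda>m. x (m mod q) + s * real (m div q))"
  unfolding min_spaced_def
proof (intro allI impI)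
  fix m
  show "x ((m + 1) mod q) + s * real ((m + 1) div q) - (x (m mod q) + s * real (m div q)) \<ge> d"
  proof (cases "Suc (m mod q) < q")
    case True
    then have "(m + 1) mod q = m mod q + 1" "(m + 1) div q = m div q"
      by (auto simp: mod_Suc div_Suc)
    with True assms(2) show ?thesis by (simp add: min_spaced_def)
  next
    case False
    with assms(1) have "Suc (m mod q) = q"
      using mod_less_divisor[of q m] by linarith
    then have "(m + 1) mod q = 0" "(m + 1) div q = m div q + 1" "m mod q = q - 1"
      by (auto simp: mod_Suc div_Suc)
    with assms(3) show ?thesis by (simp add: algebra_simps)
  qed
qed

lemma min_spaced_linear: "min_spaced d n (\<lambda>m. d * real m)"
  by (simp add: min_spaced_def algebra_simps)

lemma exists_min_spaced_array_factor_eq_0: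
  assumes "finite A" and "0 \<notin> A" and "card A \<le> Omega n"
  shows "\<exists>x. min_spaced d n x \<and> (\<forall>\<alpha>\<in>A. array_factor n x \<alpha> = 0)"
  using assms
proof (induction n arbitrary: A rule: less_induct)
  case (less n)
  show ?case
  proof (cases "A = {}")
    case True
    then show ?thesis using min_spaced_linear by blast
  next
    case False
    then obtain \<alpha> where "\<alpha> \<in> A" by blast
    with less.prems have "Omega n > 0" and "\<alpha> \<noteq> 0"
      using card_gt_0_iff[of A] by auto
    then have "n \<noteq> 0" "n \<noteq> 1" by (auto simp: Omega_def intro!: gr0I)
    then obtain p q where p: "prime p" and n: "n = p * q"
      using prime_factor_nat by (metis dvdE)
    with \<open>n \<noteq> 0\<close> have "q > 0" "q < n" and "p \<ge> 2"
      using prime_ge_2_nat[OF p] by auto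
    have "card (A - {\<alpha>}) \<le> Omega q"
      using less.prems \<open>\<alpha> \<in> A\<close> \<open>q > 0\<close> by (simp add: n Omega_prime_mult[OF p])
    then obtain x where x: "min_spaced d q x" "\<forall>\<beta>\<in>A - {\<alpha>}. array_factor q x \<beta> = 0"
      using less.IH[OF \<open>q < n\<close>, of "A - {\<alpha>}"] less.prems by auto
    \<comment> \<open>replicate the subarray \<open>x\<close> along a uniform \<open>p\<close>-element array that nulls \<open>\<alpha>\<close>\<close>
    obtain s where s: "x (q - 1) - x 0 + d \<le> s" "array_factor p (\<lambda>j. s * real j) \<alpha> = 0"
      using uniform_array_factor_eq_0[OF \<open>p \<ge> 2\<close> \<open>\<alpha> \<noteq> 0\<close>] by blast
    let ?x = "\<lambda>m. x (m mod q) + s * real (m div q)"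
    have "min_spaced d n ?x"
      unfolding n using min_spaced_nested[OF \<open>q > 0\<close> x(1) s(1)] .
    moreover have "array_factor n ?x \<beta> = 0" if "\<beta> \<in> A" for \<beta>
      using that x(2) s(2) by (cases "\<beta> = \<alpha>") (auto simp: n array_factor_nested[OF \<open>q > 0\<close>])
    ultimately show ?thesis by blast
  qed
qed

lemma card_ordered_pairs_less: "2 * card {(k, q). k < q \<and> q < (K::nat)} = K * (K - 1)"
proof (induction K)
  case 0
  then show ?case by simp
next
  case (Suc K)
  have split: "{(k, q). k < q \<and> q < Suc K} = {(k, q). k < q \<and> q < K} \<union> {..<K} \<times> {K}"
    by auto
  have "finite {(k, q). k < q \<and> q < (K::nat)}"
    by (rule finite_subset[of _ "{..<K} \<times> {..<K}"]) auto
  then have "card {(k, q). k < q \<and> q < Suc K} = card {(k, q). k < q \<and> q < K} + K"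
    unfolding split by (subst card_Un_disjoint) auto
  with Suc show ?case by (cases K) (auto simp: algebra_simps)
qed

lemma finite_split_card_le_add:
  assumes "finite P" and "card P \<le> a + b"
  obtains P1 P2 where "P = P1 \<union> P2" and "card P1 \<le> a" and "card P2 \<le> b"
proof -
  obtain P1 where P1: "P1 \<subseteq> P" "card P1 = min a (card P)"
    using obtain_subset_with_card_n[of "min a (card P)" P] by auto
  with assms have "card (P - P1) \<le> b"
    by (simp add: card_Diff_subset finite_subset)
  with P1 show ?thesis
    using that[of P1 "P - P1"] by auto
qed

lemma array_factor_uminus: "array_factor n x (- \<alpha>) = cnj (array_factor n x \<alpha>)"
  by (simp add: array_factor_def cis_cnj)

lemma cnj_chan_mult_chan:
  "cnj (chan lam b theta phi x y k (m, n)) * chan lam b theta phi x y q (m, n) =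
   cnj (b k) * b q * (cis (2 * pi / lam * (theta k - theta q) * x m) *
                      cis (2 * pi / lam * (phi k - phi q) * y n))"
proof -
  have "cis (2 * pi / lam * x m * theta k) * cis (- 2 * pi / lam * x m * theta q)
      = cis (2 * pi / lam * (theta k - theta q) * x m)"
    "cis (2 * pi / lam * y n * phi k) * cis (- 2 * pi / lam * y n * phi q)
      = cis (2 * pi / lam * (phi k - phi q) * y n)"
    by (simp_all add: cis_mult algebra_simps diff_divide_distrib)
  then show ?thesis
    by (simp add: chan_def cis_cnj ac_simps)
qed

lemma cinner_chan:
  "cinner M N (chan lam b theta phi x y k) (chan lam b theta phi x y q) =
   cnj (b k) * b q * (array_factor M x (2 * pi / lam * (theta k - theta q)) *
                      array_factor N y (2 * pi / lam * (phi k - phi q)))"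
proof -
  have "array_factor M x (2 * pi / lam * (theta k - theta q)) * array_factor N y (2 * pi / lam * (phi k - phi q))
      = (\<Sum>m<M. \<Sum>n<N. cis (2 * pi / lam * (theta k - theta q) * x m) *
                        cis (2 * pi / lam * (phi k - phi q) * y n))"
    by (simp only: array_factor_def sum_product)
  then show ?thesis
    by (simp only: cinner_def cnj_chan_mult_chan sum_distrib_left)
qed

lemma exists_positions_orthogonal_chan:
  assumes "lam \<noteq> 0"
    and distinct: "\<forall>k<K. \<forall>q<K. k \<noteq> q \<longrightarrow> theta k \<noteq> theta q \<and> phi k \<noteq> phi q"
    and "K * (K - 1) \<le> 2 * (Omega M + Omega N)"
  shows "\<exists>x y. min_spaced dx M x \<and> min_spaced dy N y \<and>
           (\<forall>k<K. \<forall>q<K. k \<noteq> q \<longrightarrow>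
              cinner M N (chan lam b theta phi x y k) (chan lam b theta phi x y q) = 0)"
proof -
  define P where "P = {(k, q). k < q \<and> q < K}"
  define u where "u k q = 2 * pi / lam * (theta k - theta q)" for k q
  define v where "v k q = 2 * pi / lam * (phi k - phi q)" for k q
  have "finite P" unfolding P_def
    by (rule finite_subset[of _ "{..<K} \<times> {..<K}"]) auto
  moreover have "card P \<le> Omega M + Omega N"
    using assms(3) card_ordered_pairs_less[of K] by (simp add: P_def)
  \<comment> \<open>each pair of users is separated either by the horizontal or by the vertical array\<close>
  ultimately obtain P1 P2 where P: "P = P1 \<union> P2" "card P1 \<le> Omega M" "card P2 \<le> Omega N"
    by (rule finite_split_card_le_add)
  have "finite P1" "finite P2" using \<open>finite P\<close> P(1) by auto
  have nonzero: "u k q \<noteq> 0" "v k q \<noteq> 0" if "(k, q) \<in> P" for k q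
    using that assms(1) distinct by (auto simp: P_def u_def v_def)
  obtain x where x: "min_spaced dx M x" "\<forall>(k, q)\<in>P1. array_factor M x (u k q) = 0"
    using exists_min_spaced_array_factor_eq_0[of "case_prod u ` P1" M dx]
      \<open>finite P1\<close> P nonzero card_image_le[of P1 "case_prod u"] by fastforce
  obtain y where y: "min_spaced dy N y" "\<forall>(k, q)\<in>P2. array_factor N y (v k q) = 0"
    using exists_min_spaced_array_factor_eq_0[of "case_prod v ` P2" N dy]
      \<open>finite P2\<close> P nonzero card_image_le[of P2 "case_prod v"] by fastforce
  have null_less: "array_factor M x (u k q) = 0 \<or> array_factor N y (v k q) = 0"
    if "k < q" "q < K" for k q
    using that x(2) y(2) P(1) by (auto simp: P_def)
  have null: "array_factor M x (u k q) = 0 \<or> array_factor N y (v k q) = 0"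
    if "k < K" "q < K" "k \<noteq> q" for k q
  proof (cases "k < q")
    case True
    then show ?thesis using null_less that by blast
  next
    case False
    then have "u k q = - u q k" "v k q = - v q k"
      by (simp_all add: u_def v_def diff_divide_distrib right_diff_distrib)
    then show ?thesis
      using null_less[of q k] False that by (auto simp: array_factor_uminus)
  qed
  show ?thesis
    using x(1) y(1) null by (auto simp: cinner_chan u_def v_def)
qed

lemma sinr_chan_orthogonal:
  assumes "\<forall>q<K. q \<noteq> k \<longrightarrow> cinner M N (chan lam b theta phi x y k) (chan lam b theta phi x y q) = 0"
  shows "sinr M N K lam b theta phi sigma2 x y (chan lam b theta phi x y) p k
           = real (M * N) * (cmod (b k))\<^sup>2 * p k / sigma2"
proof -
  let ?G = "real (M * N) * (cmod (b k))\<^sup>2"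
  have "cmod (cinner M N (chan lam b theta phi x y k) (chan lam b theta phi x y k)) = ?G"
    by (simp add: cinner_chan array_factor_def norm_mult power2_eq_square)
  moreover have "(\<Sum>q\<in>{..<K} - {k}.
      (cmod (cinner M N (chan lam b theta phi x y k) (chan lam b theta phi x y q)))\<^sup>2 * p q) = 0"
    using assms by (intro sum.neutral) auto
  ultimately show ?thesis
    by (simp add: sinr_def cnormsq_chan power2_eq_square)
qed

theorem theorem2:
  fixes M N K :: nat and lam sigma2 dminx dminy :: real
    and b :: "nat \<Rightarrow> complex" and theta phi r :: "nat \<Rightarrow> real"
  assumes "M \<ge> 1" and "N \<ge> 1" and "lam > 0" and "sigma2 > 0"
    and "dminx > 0" and "dminy > 0"
    and "\<forall>k<K. b k \<noteq> 0"
    and "\<forall>k<K. r k \<ge> 0"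
    and "\<forall>k<K. -1 \<le> theta k \<and> theta k \<le> 1 \<and> -1 \<le> phi k \<and> phi k \<le> 1"
    and "\<forall>k<K. \<forall>q<K. k \<noteq> q \<longrightarrow> theta k \<noteq> theta q \<and> phi k \<noteq> phi q"
    and "real K * (real K - 1) / 2 \<le> real (Omega M + Omega N)"
  shows "(\<forall>x y W p. feasible M N K lam b theta phi sigma2 r dminx dminy x y W p
            \<longrightarrow> (\<forall>k<K. p k \<ge> pbar M N b sigma2 r k))
       \<and> (\<exists>x y W p. feasible M N K lam b theta phi sigma2 r dminx dminy x y W p
            \<and> (\<forall>k<K. p k = pbar M N b sigma2 r k))"
proof (intro conjI allI impI)
  fix x y W p k
  assume "feasible M N K lam b theta phi sigma2 r dminx dminy x y W p" "k < K"
  then show "p k \<ge> pbar M N b sigma2 r k"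
    using feasible_imp_pbar_le assms(1,2,4,7) by blast
next
  have "real (K * (K - 1)) \<le> real (2 * (Omega M + Omega N))"
    using assms(11) by (cases K) (simp_all add: algebra_simps)
  then have "K * (K - 1) \<le> 2 * (Omega M + Omega N)"
    by (simp only: of_nat_le_iff)
  moreover have "lam \<noteq> 0" using assms(3) by simp
  ultimately obtain x y where x: "min_spaced dminx M x" and y: "min_spaced dminy N y"
    and orth: "\<forall>k<K. \<forall>q<K. k \<noteq> q \<longrightarrow>
                 cinner M N (chan lam b theta phi x y k) (chan lam b theta phi x y q) = 0"
    using exists_positions_orthogonal_chan assms(10) by blast
  let ?p = "pbar M N b sigma2 r"
  have "sinr M N K lam b theta phi sigma2 x y (chan lam b theta phi x y) ?p k = 2 powr r k - 1"
    if "k < K" for k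
    using that orth assms(1,2,4,7) by (simp add: sinr_chan_orthogonal pbar_def)
  moreover have "?p k \<ge> 0" if "k < K" for k
    using that assms(4,8) ge_one_powr_ge_zero[of 2 "r k"] by (simp add: pbar_def)
  ultimately have "feasible M N K lam b theta phi sigma2 r dminx dminy x y (chan lam b theta phi x y) ?p"
    using x y by (simp add: feasible_def min_spaced_def)
  then show "\<exists>x y W p. feasible M N K lam b theta phi sigma2 r dminx dminy x y W p
               \<and> (\<forall>k<K. p k = pbar M N b sigma2 r k)"
    by blast
qed

end
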